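(* If $m$ is a finite linear combination of functions $q_{P,\sigma}[C_{P,\sigma}]$, where each $P$ is a rational polyhedron, $\sigma\in\Lambda_{\mathbb{Q}}$ and $q_{P,\sigma}$ is a quasi-polynomial function on $\mathbb{Z}\oplus\Lambda$, then $m\in\mathcal{S}_{\mathrm{pol}}(\Lambda)$.
   Context: $V$ finite-dimensional real vector space, $\Lambda\subset V$ full-rank lattice, $\Lambda_{\mathbb{Q}}=\Lambda\otimes\mathbb{Q}$. Rational polyhedron: finite intersection of half-spaces $\{v:\langle a,v\rangle\ge c\}$, $a\in\mathrm{Hom}(\Lambda,\mathbb{Z})\otimes\mathbb{Q}$, $c\in\mathbb{Q}$. $C_{P,\sigma}=\{(t,tv+\sigma):t>0,v\in P\}$, $[C_{P,\sigma}]$ its indicator on $\mathbb{Z}\oplus\Lambda$. Quasi-polynomials: algebra generated by polynomials and periodic functions. $\mathcal{S}(\Lambda)$: functions $\sum_{P\in\mathcal{P}}\sum_{\sigma\in\Sigma_P}q_{P,\sigma}[C_{P,\sigma}]$ (decompositions) with $\mathcal{P}$ rational polyhedra, $\Sigma_P\subset\Lambda_{\mathbb{Q}}$, $q_{P,\sigma}$ quasi-polynomial, and $\{P+[0,1]\sigma\}$ locally finite in $V$. A rational polyhedral cone is a rational polyhedron $P=w+K$ with $K$ a closed convex polyhedral cone; its apex set is $L_P=w+(K\cap-K)$. For a closed half-space $H$, $P$ is $H$-polarized if $P\subset H$ and $P\cap\partial H=L_P$. $\mathcal{S}_{\mathrm{pol}}(\Lambda)$ is the set of $m\in\mathcal{S}(\Lambda)$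 having a decomposition with $\mathcal{P}$ a collection of distinct rational polyhedral cones such that for every proper affine subspace $L\subsetneq V$ which is the apex set of some cone in $\mathcal{P}$, there is a closed half-space $H$ (depending on $L$) such that every cone in $\mathcal{P}$ with apex set $L$ is $H$-polarized. *)

theory Defs
  imports "HOL-Analysis.Analysis"
begin

definition full_rank_lattice :: "'v::euclidean_space set \<Rightarrow> bool" where
  "full_rank_lattice \<Lambda> \<longleftrightarrow>
     (\<exists>B. independent B \<and> span B = UNIV \<and>
          \<Lambda> = range (\<lambda>k::'v \<Rightarrow> int. \<Sum>b\<in>B. of_int (k b) *\<^sub>R b))"

text \<open>Lambda tensor Q, viewed inside V.\<close>
definition lattice_Q :: "'v::euclidean_space set \<Rightarrow> 'v set" where
  "lattice_Q \<Lambda> = {x. \<exists>n::nat. n > 0 \<and> of_nat n *\<^sub>R x \<in> \<Lambda>}"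

text \<open>Rational linear functionals (elements of Hom(Lambda,Z) tensor Q), represented via
  the inner product.\<close>
definition rat_functional :: "'v::euclidean_space set \<Rightarrow> 'v \<Rightarrow> bool" where
  "rat_functional \<Lambda> a \<longleftrightarrow> (\<forall>l\<in>\<Lambda>. a \<bullet> l \<in> \<rat>)"

definition rat_polyhedron :: "'v::euclidean_space set \<Rightarrow> 'v set \<Rightarrow> bool" where
  "rat_polyhedron \<Lambda> P \<longleftrightarrow>
     (\<exists>F. finite F \<and> (\<forall>(a, c)\<in>F. rat_functional \<Lambda> a \<and> c \<in> \<rat>) \<and>
          P = (\<Inter>(a, c)\<in>F. {v. a \<bullet> v \<ge> c}))"

definition in_cone :: "'v::euclidean_space set \<Rightarrow> 'v \<Rightarrow> int \<times> 'v \<Rightarrow> bool" where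
  "in_cone P \<sigma> tx \<longleftrightarrow> fst tx > 0 \<and> (\<exists>v\<in>P. snd tx = of_int (fst tx) *\<^sub>R v + \<sigma>)"

text \<open>Functions on Z (+) Lambda are represented as functions on int x V; only their
  values at points of int x Lambda matter.\<close>
definition periodic_fun :: "'v::euclidean_space set \<Rightarrow> (int \<times> 'v \<Rightarrow> complex) \<Rightarrow> bool" where
  "periodic_fun \<Lambda> f \<longleftrightarrow>
     (\<exists>N::int. N > 0 \<and> (\<forall>t x s y. x \<in> \<Lambda> \<longrightarrow> y \<in> \<Lambda> \<longrightarrow>
         f (t + N * s, x + of_int N *\<^sub>R y) = f (t, x)))"

text \<open>Quasi-polynomials: the algebra generated by polynomials and periodic functions.
  Constants are periodic; polynomials are generated by the coordinate t and linear
  functions of x.\<close>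
inductive quasi_poly :: "'v::euclidean_space set \<Rightarrow> (int \<times> 'v \<Rightarrow> complex) \<Rightarrow> bool"
  for \<Lambda> where
  qp_periodic: "periodic_fun \<Lambda> f \<Longrightarrow> quasi_poly \<Lambda> f"
| qp_t: "quasi_poly \<Lambda> (\<lambda>(t, x). of_int t)"
| qp_lin: "quasi_poly \<Lambda> (\<lambda>(t, x). of_real (a \<bullet> x))"
| qp_add: "quasi_poly \<Lambda> f \<Longrightarrow> quasi_poly \<Lambda> g \<Longrightarrow> quasi_poly \<Lambda> (\<lambda>z. f z + g z)"
| qp_mult: "quasi_poly \<Lambda> f \<Longrightarrow> quasi_poly \<Lambda> g \<Longrightarrow> quasi_poly \<Lambda> (\<lambda>z. f z * g z)"

definition locally_finite_fam :: "('v::euclidean_space set \<times> 'v) set \<Rightarrow> bool" where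
  "locally_finite_fam I \<longleftrightarrow>
     (\<forall>x. \<exists>e>0. finite {p\<in>I.
        (\<Union>s\<in>{0..1::real}. (\<lambda>v. v + s *\<^sub>R snd p) ` fst p) \<inter> ball x e \<noteq> {}})"

text \<open>m has the decomposition (I, q): I is the set of pairs (P,sigma) with P in the
  collection and sigma in Sigma_P.  The sum at each point is over the (finite, by local
  finiteness) set of pairs whose cone contains the point.\<close>
definition is_decomposition ::
  "'v::euclidean_space set \<Rightarrow> (int \<times> 'v \<Rightarrow> complex) \<Rightarrow> ('v set \<times> 'v) set
     \<Rightarrow> ('v set \<Rightarrow> 'v \<Rightarrow> int \<times> 'v \<Rightarrow> complex) \<Rightarrow> bool" where
  "is_decomposition \<Lambda> m I q \<longleftrightarrow>
     (\<forall>(P, \<sigma>)\<in>I. rat_polyhedron \<Lambda> P \<and> \<sigma> \<in> lattice_Q \<Lambda> \<and> quasi_poly \<Lambda> (q P \<sigma>)) \<and>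
     locally_finite_fam I \<and>
     (\<forall>t x. x \<in> \<Lambda> \<longrightarrow>
        m (t, x) = (\<Sum>p\<in>{p\<in>I. in_cone (fst p) (snd p) (t, x)}. q (fst p) (snd p) (t, x)))"

definition in_S :: "'v::euclidean_space set \<Rightarrow> (int \<times> 'v \<Rightarrow> complex) \<Rightarrow> bool" where
  "in_S \<Lambda> m \<longleftrightarrow> (\<exists>I q. is_decomposition \<Lambda> m I q)"

definition rat_poly_cone :: "'v::euclidean_space set \<Rightarrow> 'v set \<Rightarrow> bool" where
  "rat_poly_cone \<Lambda> P \<longleftrightarrow> rat_polyhedron \<Lambda> P \<and>
     (\<exists>w K. P = (\<lambda>v. w + v) ` K \<and> convex_cone K \<and> closed K \<and> polyhedron K)"

definition apex_set :: "'v::euclidean_space set \<Rightarrow> 'v set" where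
  "apex_set P = (SOME L. \<exists>w K. P = (\<lambda>v. w + v) ` K \<and> convex_cone K \<and> closed K \<and>
       polyhedron K \<and> L = (\<lambda>v. w + v) ` (K \<inter> uminus ` K))"

definition polarized :: "'v::euclidean_space \<Rightarrow> real \<Rightarrow> 'v set \<Rightarrow> bool" where
  "polarized a c P \<longleftrightarrow> P \<subseteq> {v. a \<bullet> v \<ge> c} \<and> P \<inter> {v. a \<bullet> v = c} = apex_set P"

definition in_S_pol :: "'v::euclidean_space set \<Rightarrow> (int \<times> 'v \<Rightarrow> complex) \<Rightarrow> bool" where
  "in_S_pol \<Lambda> m \<longleftrightarrow>
     (\<exists>I q. is_decomposition \<Lambda> m I q \<and>
        (\<forall>p\<in>I. rat_poly_cone \<Lambda> (fst p)) \<and>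
        (\<forall>P\<in>fst ` I. apex_set P \<noteq> UNIV \<longrightarrow>
           (\<exists>a c. a \<noteq> 0 \<and>
              (\<forall>P'\<in>fst ` I. apex_set P' = apex_set P \<longrightarrow> polarized a c P'))))"

end

theory Submission
  imports Defs
begin

(* Write every rational polyhedron as the solution set of finitely many constraints a \<bullet> v \<ge> c,
   closed under negation.  Fix a vector g that is not orthogonal to any dual vector of any
   independent subfamily.  Inclusion-exclusion along linear relations between the normals, and
   then flipping the constraints whose dual vector has negative g-component, writes the indicator
   of each polyhedron as an integer combination of indicators of "good" simplicial cones: their
   normals are independent and all their edges point into g \<bullet> v > 0.  A good cell with apex
   w + W is polarized by the half-space {v. a \<bullet> v \<ge> a \<bullet> w}, where a is the orthogonal
   projection of g onto the orthogonal complement of W; since a depends only on W, one half-space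
   works for all good cells with the same apex.  Regrouping the cones over the cells by their
   translation vectors sigma gives the required decomposition. *)

section \<open>Linear constraints and dual vectors\<close>

definition opposite :: "'v::real_inner \<times> real \<Rightarrow> 'v \<times> real" where
  "opposite h = (- fst h, - snd h)"

definition flip :: "'v::real_inner \<times> real \<Rightarrow> ('v \<times> real) set \<Rightarrow> ('v \<times> real) set" where
  "flip s B = insert (opposite s) (B - {s})"

definition feasible_set :: "('v::real_inner \<times> real) set \<Rightarrow> 'v set" where
  "feasible_set G = {v. \<forall>h\<in>G. snd h \<le> fst h \<bullet> v}"

definition simplicial_cone :: "('v::real_inner \<times> real) set \<Rightarrow> ('v \<times> real) set \<Rightarrow> 'v set" where
  "simplicial_cone B S = feasible_set (B \<union> opposite ` (B - S))"

definition independent_constraints :: "('v::euclidean_space \<times> real) set \<Rightarrow> bool" where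
  "independent_constraints B \<longleftrightarrow> inj_on fst B \<and> independent (fst ` B)"

definition is_dual_vector :: "('v::euclidean_space \<times> real) set \<Rightarrow> 'v \<times> real \<Rightarrow> 'v \<Rightarrow> bool" where
  "is_dual_vector B h u \<longleftrightarrow>
     u \<in> span (fst ` B) \<and> (\<forall>h'\<in>B. fst h' \<bullet> u = (if h' = h then 1 else 0))"

definition dual_vector :: "('v::euclidean_space \<times> real) set \<Rightarrow> 'v \<times> real \<Rightarrow> 'v" where
  "dual_vector B h = (SOME u. is_dual_vector B h u)"

lemma opposite_opposite [simp]: "opposite (opposite h) = h"
  by (simp add: opposite_def)

lemma mem_simplicial_cone:
  "v \<in> simplicial_cone B S \<longleftrightarrow> (\<forall>h\<in>B. snd h \<le> fst h \<bullet> v) \<and> (\<forall>h\<in>B - S. fst h \<bullet> v \<le> snd h)"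
  unfolding simplicial_cone_def feasible_set_def ball_Un Ball_image_comp
  by (auto simp: opposite_def)

lemma feasible_set_eq_simplicial_cone: "feasible_set B = simplicial_cone B B"
  by (simp add: simplicial_cone_def)

lemma independent_constraints_finite: "independent_constraints B \<Longrightarrow> finite B"
  unfolding independent_constraints_def using independent_bound finite_imageD by blast

lemma independent_constraints_subset:
  "independent_constraints B \<Longrightarrow> C \<subseteq> B \<Longrightarrow> independent_constraints C"
  unfolding independent_constraints_def by (meson image_mono independent_mono inj_on_subset)

lemma independent_constraints_not_in_span:
  assumes "independent_constraints B" "h \<in> B"
  shows "fst h \<notin> span (fst ` (B - {h}))"
proof -
  have "fst ` (B - {h}) = fst ` B - {fst h}"
    using assms unfolding independent_constraints_def inj_on_def by blast
  then show ?thesis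
    using assms unfolding independent_constraints_def dependent_def by auto
qed

lemma span_inner_eq_0:
  assumes "y \<in> span T" "\<And>t. t \<in> T \<Longrightarrow> t \<bullet> x = 0"
  shows "y \<bullet> x = 0"
  using orthogonal_to_span[OF assms(1), of x] assms(2)
  by (auto simp: orthogonal_def inner_commute)

lemma dual_vector_exists:
  assumes "independent_constraints B" "h \<in> B"
  shows "\<exists>u. is_dual_vector B h u"
proof -
  let ?T = "fst ` (B - {h})"
  obtain y z where y: "y \<in> span ?T" and z: "\<And>w. w \<in> span ?T \<Longrightarrow> orthogonal z w"
    and yz: "fst h = y + z"
    using orthogonal_subspace_decomp_exists by blast
  have "z \<noteq> 0"
    using independent_constraints_not_in_span[OF assms] y yz by auto
  have "fst h \<in> span (fst ` B)" "y \<in> span (fst ` B)"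
    using assms(2) y span_mono[of ?T "fst ` B"] by (auto simp: span_base)
  then have "z \<in> span (fst ` B)"
    using yz by (metis add_diff_cancel_left' span_diff)
  moreover have "fst h \<bullet> z = z \<bullet> z"
    using z[OF y] yz by (simp add: orthogonal_def inner_add_left inner_commute[of y z])
  moreover have "fst h' \<bullet> z = 0" if "h' \<in> B" "h' \<noteq> h" for h'
    using z[of "fst h'"] that by (simp add: span_base orthogonal_def inner_commute)
  ultimately have "is_dual_vector B h (inverse (z \<bullet> z) *\<^sub>R z)"
    using \<open>z \<noteq> 0\<close> by (simp add: is_dual_vector_def span_mul)
  then show ?thesis ..
qed

lemma is_dual_vector_unique:
  assumes "is_dual_vector B h u" "is_dual_vector B h u'"
  shows "u = u'"
proof -
  have "u - u' \<in> span (fst ` B)"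
    using assms by (simp add: is_dual_vector_def span_diff)
  moreover have "t \<bullet> (u - u') = 0" if t: "t \<in> fst ` B" for t
  proof -
    obtain h' where "h' \<in> B" "t = fst h'"
      using t by blast
    then show ?thesis
      using assms by (simp add: is_dual_vector_def inner_diff_right)
  qed
  ultimately have "(u - u') \<bullet> (u - u') = 0"
    by (rule span_inner_eq_0)
  then show ?thesis by simp
qed

lemma is_dual_vector_dual_vector:
  "independent_constraints B \<Longrightarrow> h \<in> B \<Longrightarrow> is_dual_vector B h (dual_vector B h)"
  unfolding dual_vector_def by (rule someI_ex) (rule dual_vector_exists)

lemma dual_vector_eqI:
  "independent_constraints B \<Longrightarrow> h \<in> B \<Longrightarrow> is_dual_vector B h u \<Longrightarrow> dual_vector B h = u"
  using is_dual_vector_unique is_dual_vector_dual_vector by blast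

lemma dual_vector_in_span:
  "independent_constraints B \<Longrightarrow> h \<in> B \<Longrightarrow> dual_vector B h \<in> span (fst ` B)"
  using is_dual_vector_dual_vector is_dual_vector_def by blast

lemma inner_dual_vector:
  "independent_constraints B \<Longrightarrow> h \<in> B \<Longrightarrow> h' \<in> B \<Longrightarrow>
     fst h' \<bullet> dual_vector B h = (if h' = h then 1 else 0)"
  using is_dual_vector_dual_vector is_dual_vector_def by blast

lemma dual_vector_nonzero:
  "independent_constraints B \<Longrightarrow> h \<in> B \<Longrightarrow> dual_vector B h \<noteq> 0"
  using inner_dual_vector[of B h h] by auto

lemma opposite_notin_independent:
  assumes "independent_constraints B" "s \<in> B"
  shows "opposite s \<notin> B"
proof
  assume "opposite s \<in> B"
  moreover have "fst (opposite s) \<bullet> dual_vector B s = -1"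
    using inner_dual_vector[OF assms assms(2)] by (simp add: opposite_def)
  ultimately show False
    using inner_dual_vector[OF assms] by (fastforce split: if_splits)
qed

lemma span_flip:
  assumes "s \<in> B"
  shows "span (fst ` flip s B) = span (fst ` B)"
proof -
  have "fst ` flip s B = insert (- fst s) (fst ` (B - {s}))"
    by (simp add: flip_def opposite_def)
  then have "fst ` flip s B \<subseteq> span (fst ` B)"
    using assms span_superset[of "fst ` B"] by (auto intro: span_neg span_base)
  moreover have "fst h \<in> span (fst ` flip s B)" if "h \<in> B" for h
  proof (cases "h = s")
    case True
    have "- fst (opposite s) \<in> span (fst ` flip s B)"
      by (simp add: flip_def span_base span_neg)
    then show ?thesis
      using True by (simp add: opposite_def)
  next
    case False
    then show ?thesis
      using that by (intro span_base) (auto simp: flip_def)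
  qed
  ultimately show ?thesis
    unfolding span_eq by blast
qed

lemma independent_constraints_flip:
  assumes "independent_constraints B" "s \<in> B"
  shows "independent_constraints (flip s B)"
proof -
  have B: "inj_on fst B" "independent (fst ` B)"
    using assms(1) unfolding independent_constraints_def by auto
  have not_span: "- fst s \<notin> span (fst ` (B - {s}))"
  proof
    assume "- fst s \<in> span (fst ` (B - {s}))"
    then have "fst s \<in> span (fst ` (B - {s}))"
      using span_neg[of "- fst s"] by simp
    then show False
      using independent_constraints_not_in_span[OF assms] by contradiction
  qed
  then have not_img: "fst (opposite s) \<notin> fst ` (B - {s} - {opposite s})"
    by (metis Diff_subset image_mono opposite_def fst_conv span_base subsetD)
  have "independent (fst ` (B - {s}))"
    by (rule independent_mono[OF B(2)]) auto
  then have "independent (insert (- fst s) (fst ` (B - {s})))"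
    using not_span by (rule independent_insertI[rotated])
  moreover have "inj_on fst (insert (opposite s) (B - {s}))"
    unfolding inj_on_insert using not_img inj_on_subset[OF B(1)] by blast
  ultimately show ?thesis
    unfolding independent_constraints_def flip_def by (simp add: opposite_def)
qed

lemma dual_vector_flip:
  assumes "independent_constraints B" "s \<in> B" "h \<in> B" "h \<noteq> s"
  shows "dual_vector (flip s B) h = dual_vector B h"
proof (rule dual_vector_eqI)
  show "independent_constraints (flip s B)"
    using independent_constraints_flip assms(1,2) .
  show "h \<in> flip s B"
    using assms by (simp add: flip_def)
  show "is_dual_vector (flip s B) h (dual_vector B h)"
    unfolding is_dual_vector_def span_flip[OF assms(2)]
    using assms inner_dual_vector[OF assms(1,3)] dual_vector_in_span[OF assms(1,3)]
      opposite_notin_independent[OF assms(1,2)]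
    by (auto simp: flip_def opposite_def)
qed

lemma dual_vector_flip_opposite:
  assumes "independent_constraints B" "s \<in> B"
  shows "dual_vector (flip s B) (opposite s) = - dual_vector B s"
proof (rule dual_vector_eqI)
  show "independent_constraints (flip s B)"
    using independent_constraints_flip assms .
  show "opposite s \<in> flip s B"
    by (simp add: flip_def)
  show "is_dual_vector (flip s B) (opposite s) (- dual_vector B s)"
    unfolding is_dual_vector_def span_flip[OF assms(2)]
    using assms inner_dual_vector[OF assms(1,2)] dual_vector_in_span[OF assms]
      opposite_notin_independent[OF assms]
    by (auto simp: span_neg flip_def opposite_def)
qed

lemma exists_inner_nonzero:
  fixes Z :: "'v::real_inner set"
  assumes "finite Z"
  shows "\<exists>g. \<forall>z\<in>Z. z \<noteq> 0 \<longrightarrow> g \<bullet> z \<noteq> 0"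
  using assms
proof (induction Z rule: finite_induct)
  case (insert z0 Z)
  obtain g where g: "\<forall>z\<in>Z. z \<noteq> 0 \<longrightarrow> g \<bullet> z \<noteq> 0"
    using insert.IH by blast
  have "finite ((\<lambda>z. - (g \<bullet> z) / (z0 \<bullet> z)) ` insert z0 Z)"
    using insert.hyps(1) by simp
  then obtain e :: real where e: "e \<notin> (\<lambda>z. - (g \<bullet> z) / (z0 \<bullet> z)) ` insert z0 Z"
    using ex_new_if_finite[OF infinite_UNIV_char_0] by blast
  have "(g + e *\<^sub>R z0) \<bullet> z \<noteq> 0" if z: "z \<in> insert z0 Z" "z \<noteq> 0" for z
  proof (cases "z0 \<bullet> z = 0")
    case True
    then have "z \<in> Z"
      using z by (metis inner_eq_zero_iff insertE)
    then show ?thesis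
      using g True z by (simp add: inner_add_left)
  next
    case False
    show ?thesis
    proof
      assume "(g + e *\<^sub>R z0) \<bullet> z = 0"
      then have "e * (z0 \<bullet> z) = - (g \<bullet> z)"
        by (simp add: inner_add_left add_eq_0_iff2)
      then have "e = - (g \<bullet> z) / (z0 \<bullet> z)"
        using False by (simp add: field_simps)
      then show False
        using e z(1) by blast
    qed
  qed
  then show ?case by blast
qed simp

definition generic_for :: "('v::euclidean_space \<times> real) set \<Rightarrow> 'v \<Rightarrow> bool" where
  "generic_for A g \<longleftrightarrow>
     (\<forall>B\<subseteq>A. independent_constraints B \<longrightarrow> (\<forall>h\<in>B. g \<bullet> dual_vector B h \<noteq> 0))"

lemma generic_for_exists:
  assumes "finite A"
  shows "\<exists>g. generic_for A g"
proof -
  let ?Z = "(\<lambda>(B, h). dual_vector B h) ` (Pow A \<times> A)"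
  have "finite ?Z"
    using assms by simp
  then obtain g where g: "\<forall>z\<in>?Z. z \<noteq> 0 \<longrightarrow> g \<bullet> z \<noteq> 0"
    using exists_inner_nonzero by blast
  have "generic_for A g"
    unfolding generic_for_def
  proof (intro allI impI ballI)
    fix B h
    assume B: "B \<subseteq> A" "independent_constraints B" "h \<in> B"
    then have "dual_vector B h \<in> ?Z"
      by (intro image_eqI[of _ _ "(B, h)"]) auto
    then show "g \<bullet> dual_vector B h \<noteq> 0"
      using g dual_vector_nonzero[OF B(2,3)] by blast
  qed
  then show ?thesis ..
qed

section \<open>Integer combinations of indicator functions\<close>

definition int_combination :: "'a set set \<Rightarrow> ('a \<Rightarrow> int) \<Rightarrow> bool" where
  "int_combination \<Q> f \<longleftrightarrow>
     (\<exists>R \<kappa>. finite R \<and> R \<subseteq> \<Q> \<and> f = (\<lambda>v. \<Sum>Q\<in>R. \<kappa> Q * of_bool (v \<in> Q)))"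

lemma sum_extend_support:
  fixes \<kappa> :: "'a \<Rightarrow> 'b::semiring_0"
  assumes "finite R'" "R \<subseteq> R'"
  shows "(\<Sum>Q\<in>R'. (if Q \<in> R then \<kappa> Q else 0) * x Q) = (\<Sum>Q\<in>R. \<kappa> Q * x Q)"
proof -
  have "(\<Sum>Q\<in>R'. (if Q \<in> R then \<kappa> Q else 0) * x Q) = (\<Sum>Q\<in>R'. if Q \<in> R then \<kappa> Q * x Q else 0)"
    by (rule sum.cong) auto
  also have "\<dots> = (\<Sum>Q\<in>R' \<inter> R. \<kappa> Q * x Q)"
    using assms(1) by (rule sum.inter_restrict[symmetric])
  finally show ?thesis
    using assms(2) by (simp add: Int_absorb1)
qed

lemma int_combination_common_support:
  assumes "finite J" "\<forall>j\<in>J. int_combination \<Q> (f j)"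
  obtains R \<kappa> where "finite R" "R \<subseteq> \<Q>"
    "\<forall>j\<in>J. f j = (\<lambda>v. \<Sum>Q\<in>R. \<kappa> j Q * of_bool (v \<in> Q))"
proof -
  obtain R where "\<forall>j\<in>J. \<exists>\<kappa>. finite (R j) \<and> R j \<subseteq> \<Q> \<and>
      f j = (\<lambda>v. \<Sum>Q\<in>R j. \<kappa> Q * of_bool (v \<in> Q))"
    using bchoice[OF assms(2)[unfolded int_combination_def]] by blast
  then have "\<exists>\<kappa>. \<forall>j\<in>J. finite (R j) \<and> R j \<subseteq> \<Q> \<and>
      f j = (\<lambda>v. \<Sum>Q\<in>R j. \<kappa> j Q * of_bool (v \<in> Q))"
    by (rule bchoice)
  then obtain \<kappa> where R: "\<forall>j\<in>J. finite (R j) \<and> R j \<subseteq> \<Q> \<and>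
      f j = (\<lambda>v. \<Sum>Q\<in>R j. \<kappa> j Q * of_bool (v \<in> Q))" ..
  have fin: "finite (\<Union>(R ` J))"
    using R assms(1) by blast
  have eq: "f j = (\<lambda>v. \<Sum>Q\<in>\<Union>(R ` J). (if Q \<in> R j then \<kappa> j Q else 0) * of_bool (v \<in> Q))"
    if j: "j \<in> J" for j
  proof -
    have sub: "R j \<subseteq> \<Union>(R ` J)"
      using j by blast
    have "f j = (\<lambda>v. \<Sum>Q\<in>R j. \<kappa> j Q * of_bool (v \<in> Q))"
      using R j by blast
    also have "\<dots> = (\<lambda>v. \<Sum>Q\<in>\<Union>(R ` J). (if Q \<in> R j then \<kappa> j Q else 0) * of_bool (v \<in> Q))"
      unfolding sum_extend_support[OF fin sub] ..
    finally show ?thesis .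
  qed
  have "\<Union>(R ` J) \<subseteq> \<Q>"
    using R by blast
  with fin show thesis
    by (rule that[of _ "\<lambda>j Q. if Q \<in> R j then \<kappa> j Q else 0"]) (use eq in blast)
qed

lemma int_combination_indicator: "Q \<in> \<Q> \<Longrightarrow> int_combination \<Q> (\<lambda>v. of_bool (v \<in> Q))"
  unfolding int_combination_def by (intro exI[of _ "{Q}"] exI[of _ "\<lambda>_. 1"]) auto

lemma int_combination_lincomb:
  assumes "int_combination \<Q> f1" "int_combination \<Q> f2"
  shows "int_combination \<Q> (\<lambda>v. c1 * f1 v + c2 * f2 v)"
proof -
  have "finite (UNIV :: bool set)" "\<forall>b\<in>UNIV. int_combination \<Q> (if b then f1 else f2)"
    using assms by simp_all
  then obtain R \<kappa> where R: "finite R" "R \<subseteq> \<Q>"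
    and f: "\<forall>b\<in>UNIV. (if b then f1 else f2) = (\<lambda>v. \<Sum>Q\<in>R. \<kappa> b Q * of_bool (v \<in> Q))"
    by (rule int_combination_common_support)
  have "c1 * f1 v + c2 * f2 v = (\<Sum>Q\<in>R. (c1 * \<kappa> True Q + c2 * \<kappa> False Q) * of_bool (v \<in> Q))"
    for v
    using bspec[OF f UNIV_I, of True] bspec[OF f UNIV_I, of False]
    by (simp add: distrib_right sum.distrib sum_distrib_left mult.assoc del: sum_mult_of_bool_eq)
  then show ?thesis
    unfolding int_combination_def using R
    by (intro exI[of _ R] exI[of _ "\<lambda>Q. c1 * \<kappa> True Q + c2 * \<kappa> False Q"] conjI ext)
qed

lemma int_combination_sum:
  assumes "finite X" "\<And>x. x \<in> X \<Longrightarrow> int_combination \<Q> (f x)"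
  shows "int_combination \<Q> (\<lambda>v. \<Sum>x\<in>X. c x * f x v)"
  using assms
proof (induction X rule: finite_induct)
  case empty
  then show ?case
    unfolding int_combination_def by (intro exI[of _ "{}"]) auto
next
  case (insert x X)
  then show ?case
    using int_combination_lincomb[of \<Q> "f x" "\<lambda>v. \<Sum>x\<in>X. c x * f x v" "c x" 1] by simp
qed

section \<open>Decomposing polyhedra into good cells\<close>

definition negative_edges :: "'v::euclidean_space \<Rightarrow> ('v \<times> real) set \<Rightarrow> ('v \<times> real) set \<Rightarrow> ('v \<times> real) set" where
  "negative_edges g B S = {s\<in>S. g \<bullet> dual_vector B s < 0}"

definition good_cells :: "('v::euclidean_space \<times> real) set \<Rightarrow> 'v \<Rightarrow> 'v set set" where
  "good_cells A g = {simplicial_cone B S | B S. B \<subseteq> A \<and> independent_constraints B \<and> S \<subseteq> B \<and>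
     (\<forall>s\<in>S. 0 < g \<bullet> dual_vector B s)}"

lemma good_cell_no_negative_edges:
  assumes "generic_for A g" "B \<subseteq> A" "independent_constraints B" "S \<subseteq> B"
    and "negative_edges g B S = {}"
  shows "simplicial_cone B S \<in> good_cells A g"
proof -
  have "0 < g \<bullet> dual_vector B s" if "s \<in> S" for s
  proof -
    have "g \<bullet> dual_vector B s \<noteq> 0"
      using assms(1-4) that unfolding generic_for_def by blast
    moreover have "\<not> g \<bullet> dual_vector B s < 0"
      using assms(5) that unfolding negative_edges_def by blast
    ultimately show ?thesis
      by linarith
  qed
  then show ?thesis
    using assms(2-4) unfolding good_cells_def by blast
qed

lemma card_flip:
  assumes "finite B" "s \<in> B" "opposite s \<notin> B"
  shows "card (flip s B) = card B"
proof -
  have "card (flip s B) = Suc (card (B - {s}))"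
    using assms by (simp add: flip_def card_insert_disjoint)
  also have "\<dots> = card B"
    using card_Suc_Diff1[OF assms(1,2)] by simp
  finally show ?thesis .
qed

(* On the cell of the remaining constraints: [a \<bullet> v \<ge> c] = 1 - [a \<bullet> v \<le> c] + [a \<bullet> v = c]. *)
lemma simplicial_cone_flip_indicator:
  assumes "s \<in> S" "S \<subseteq> B" "opposite s \<notin> B"
  shows "(of_bool (v \<in> simplicial_cone B S) :: int) =
    of_bool (v \<in> simplicial_cone (B - {s}) (S - {s}))
    - of_bool (v \<in> simplicial_cone (flip s B) (insert (opposite s) (S - {s})))
    + of_bool (v \<in> simplicial_cone B (S - {s}))"
proof -
  let ?Q = "v \<in> simplicial_cone (B - {s}) (S - {s})"
  have ball_B: "(\<forall>h\<in>B. P h) \<longleftrightarrow> P s \<and> (\<forall>h\<in>B - {s}. P h)" for P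
    using assms by blast
  have ball_flip: "(\<forall>h\<in>flip s B. P h) \<longleftrightarrow> P (opposite s) \<and> (\<forall>h\<in>B - {s}. P h)" for P
    by (auto simp: flip_def)
  have "B - (S - {s}) = insert s (B - S)" "B - {s} - (S - {s}) = B - S"
    "flip s B - insert (opposite s) (S - {s}) = B - S"
    using assms by (auto simp: flip_def)
  then have "v \<in> simplicial_cone B S \<longleftrightarrow> ?Q \<and> snd s \<le> fst s \<bullet> v"
    and "v \<in> simplicial_cone (flip s B) (insert (opposite s) (S - {s})) \<longleftrightarrow> ?Q \<and> fst s \<bullet> v \<le> snd s"
    and "v \<in> simplicial_cone B (S - {s}) \<longleftrightarrow> ?Q \<and> snd s \<le> fst s \<bullet> v \<and> fst s \<bullet> v \<le> snd s"
    using assms by (auto simp: mem_simplicial_cone ball_B ball_flip opposite_def)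
  moreover have "snd s \<le> fst s \<bullet> v \<or> fst s \<bullet> v \<le> snd s"
    by linarith
  ultimately show ?thesis
    by (cases ?Q) auto
qed

lemma negative_edges_flip:
  assumes "independent_constraints B" "s \<in> negative_edges g B S" "S \<subseteq> B"
  shows "negative_edges g (flip s B) (insert (opposite s) (S - {s})) = negative_edges g B S - {s}"
proof -
  have sB: "s \<in> B" and "g \<bullet> dual_vector B s < 0"
    using assms(2,3) by (auto simp: negative_edges_def)
  then have "\<not> g \<bullet> dual_vector (flip s B) (opposite s) < 0"
    by (simp add: dual_vector_flip_opposite[OF assms(1) sB])
  moreover have "dual_vector (flip s B) x = dual_vector B x" if "x \<in> S - {s}" for x
    using dual_vector_flip[OF assms(1) sB] that assms(3) by blast
  ultimately show ?thesis
    unfolding negative_edges_def by auto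
qed

(* Induction on the number of negative edges: flipping s replaces dual_vector B s by its negative. *)
lemma int_combination_simplicial_cone_same_card:
  assumes A: "\<forall>h\<in>A. opposite h \<in> A" and g: "generic_for A g"
    and smaller: "\<And>B' S'. card B' < card B0 \<Longrightarrow> B' \<subseteq> A \<Longrightarrow> independent_constraints B' \<Longrightarrow>
      S' \<subseteq> B' \<Longrightarrow> int_combination (good_cells A g) (\<lambda>v. of_bool (v \<in> simplicial_cone B' S'))"
  shows "card B = card B0 \<Longrightarrow> B \<subseteq> A \<Longrightarrow> independent_constraints B \<Longrightarrow> S \<subseteq> B \<Longrightarrow>
    int_combination (good_cells A g) (\<lambda>v. of_bool (v \<in> simplicial_cone B S))"
proof (induction "card (negative_edges g B S)" arbitrary: B S rule: less_induct)
  case less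
  have fin: "finite B" "finite (negative_edges g B S)"
    using less.prems independent_constraints_finite finite_subset
    by (fastforce simp: negative_edges_def)+
  show ?case
  proof (cases "negative_edges g B S = {}")
    case True
    then have "simplicial_cone B S \<in> good_cells A g"
      by (rule good_cell_no_negative_edges[OF g less.prems(2-4)])
    then show ?thesis
      by (rule int_combination_indicator)
  next
    case False
    then obtain s where s: "s \<in> negative_edges g B S"
      by blast
    have sS: "s \<in> S" and sB: "s \<in> B"
      using s less.prems by (auto simp: negative_edges_def)
    have opp: "opposite s \<notin> B"
      using opposite_notin_independent less.prems(3) sB .
    have "card (B - {s}) < card B0"
      using card_Diff1_less[OF fin(1) sB] less.prems(1) by simp
    then have r1: "int_combination (good_cells A g)
        (\<lambda>v. of_bool (v \<in> simplicial_cone (B - {s}) (S - {s})))"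
      using less.prems by (intro smaller) (auto intro: independent_constraints_subset)
    have "card (flip s B) = card B0"
      using card_flip[OF fin(1) sB opp] less.prems(1) by simp
    moreover have "card (negative_edges g (flip s B) (insert (opposite s) (S - {s})))
        < card (negative_edges g B S)"
      unfolding negative_edges_flip[OF less.prems(3) s less.prems(4)]
      using fin(2) s by (rule card_Diff1_less)
    moreover have "flip s B \<subseteq> A"
      using A sB less.prems(2) by (auto simp: flip_def)
    ultimately have r2: "int_combination (good_cells A g)
        (\<lambda>v. of_bool (v \<in> simplicial_cone (flip s B) (insert (opposite s) (S - {s}))))"
      using less.prems independent_constraints_flip[OF less.prems(3) sB]
      by (intro less.hyps) (auto simp: flip_def)
    have "negative_edges g B (S - {s}) = negative_edges g B S - {s}"
      by (auto simp: negative_edges_def)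
    then have "card (negative_edges g B (S - {s})) < card (negative_edges g B S)"
      using fin(2) s by (simp only: card_Diff1_less)
    then have r3: "int_combination (good_cells A g)
        (\<lambda>v. of_bool (v \<in> simplicial_cone B (S - {s})))"
      using less.prems by (intro less.hyps) auto
    show ?thesis
      using int_combination_lincomb[OF int_combination_lincomb[OF r1 r2, of 1 "-1"] r3, of 1 1]
      by (simp add: simplicial_cone_flip_indicator[OF sS less.prems(4) opp])
  qed
qed

lemma int_combination_simplicial_cone:
  assumes "\<forall>h\<in>A. opposite h \<in> A" "generic_for A g"
  shows "B \<subseteq> A \<Longrightarrow> independent_constraints B \<Longrightarrow> S \<subseteq> B \<Longrightarrow>
    int_combination (good_cells A g) (\<lambda>v. of_bool (v \<in> simplicial_cone B S))"
proof (induction "card B" arbitrary: B S rule: less_induct)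
  case less
  show ?case
    using int_combination_simplicial_cone_same_card[OF assms less.hyps] less.prems by blast
qed

lemma prod_of_bool:
  "finite X \<Longrightarrow> (\<Prod>x\<in>X. of_bool (p x) :: 'a::comm_semiring_1) = of_bool (\<forall>x\<in>X. p x)"
  by (induction X rule: finite_induct) auto

(* Expand \<Prod>h\<in>F. ([p h] - 1), which vanishes because some p h holds. *)
lemma indicator_inclusion_exclusion:
  assumes "finite G" "F \<subseteq> G" "(\<forall>h\<in>G - F. p h) \<longrightarrow> (\<exists>h\<in>F. p h)"
  shows "(of_bool (\<forall>h\<in>G. p h) :: int) =
    (\<Sum>T\<in>Pow F - {{}}. (-1) ^ (card T + 1) * of_bool (\<forall>h\<in>G - T. p h))"
proof (cases "\<forall>h\<in>G - F. p h")
  case True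
  have finF: "finite F"
    using assms(1,2) finite_subset by blast
  have restrict: "(\<forall>h\<in>G - T. p h) \<longleftrightarrow> (\<forall>h\<in>F - T. p h)" if "T \<subseteq> F" for T
    using True that assms(2) by blast
  obtain h0 where "h0 \<in> F" "p h0"
    using True assms(3) by blast
  then have "(\<Prod>h\<in>F. - 1 + of_bool (p h) :: int) = 0"
    using finF by (auto intro: prod_zero)
  then have "0 = (\<Sum>T\<in>Pow F. (-1) ^ card T * of_bool (\<forall>h\<in>F - T. p h) :: int)"
    unfolding prod_add[OF finF] using finF by (simp add: prod_of_bool finite_subset)
  also have "\<dots> = of_bool (\<forall>h\<in>F. p h) +
      (\<Sum>T\<in>Pow F - {{}}. (-1) ^ card T * of_bool (\<forall>h\<in>F - T. p h))"
    using finF by (subst sum.remove[of _ "{}"]) auto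
  finally have "of_bool (\<forall>h\<in>F. p h) =
      - (\<Sum>T\<in>Pow F - {{}}. (-1) ^ card T * of_bool (\<forall>h\<in>F - T. p h) :: int)"
    by linarith
  also have "\<dots> = (\<Sum>T\<in>Pow F - {{}}. (-1) ^ (card T + 1) * of_bool (\<forall>h\<in>G - T. p h))"
    unfolding sum_negf[symmetric] by (rule sum.cong) (auto simp: restrict)
  finally show ?thesis
    using restrict[of "{}"] by simp
next
  case False
  then have "\<not> (\<forall>h\<in>G - T. p h)" if "T \<subseteq> F" for T
    using that by blast
  then have "(\<Sum>T\<in>Pow F - {{}}. (-1) ^ (card T + 1) * of_bool (\<forall>h\<in>G - T. p h) :: int) = 0"
    by (intro sum.neutral) auto
  moreover have "\<not> (\<forall>h\<in>G. p h)"
    using False by blast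
  ultimately show ?thesis
    by simp
qed

lemma dependent_constraints_relation:
  assumes "finite G" "\<not> independent_constraints G"
  obtains \<mu> where "(\<Sum>h\<in>G. \<mu> h *\<^sub>R fst h) = 0" "\<exists>h\<in>G. \<mu> h \<noteq> 0"
proof (cases "inj_on fst G")
  case False
  then obtain x y where xy: "x \<in> G" "y \<in> G" "x \<noteq> y" "fst x = fst y"
    unfolding inj_on_def by blast
  let ?\<mu> = "\<lambda>h. if h = x then 1 else if h = y then -1 else 0 :: real"
  have "(\<Sum>h\<in>G. ?\<mu> h *\<^sub>R fst h) = (\<Sum>h\<in>G. (if h = x then fst x else 0) - (if h = y then fst y else 0))"
    using xy by (intro sum.cong) auto
  also have "\<dots> = 0"
    using assms(1) xy by (simp add: sum.distrib sum_subtractf)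
  finally have "(\<Sum>h\<in>G. ?\<mu> h *\<^sub>R fst h) = 0" .
  moreover have "\<exists>h\<in>G. ?\<mu> h \<noteq> 0"
    using xy(1) by (intro bexI[of _ x]) auto
  ultimately show ?thesis
    by (rule that)
next
  case True
  then have "dependent (fst ` G)"
    using assms(2) unfolding independent_constraints_def by blast
  then obtain u where u: "\<exists>a\<in>fst ` G. u a \<noteq> 0" "(\<Sum>a\<in>fst ` G. u a *\<^sub>R a) = 0"
    using dependent_finite[of "fst ` G"] assms(1) by auto
  show ?thesis
  proof (rule that[of "u \<circ> fst"])
    show "(\<Sum>h\<in>G. (u \<circ> fst) h *\<^sub>R fst h) = 0"
      using u(2) True by (simp add: sum.reindex)
    show "\<exists>h\<in>G. (u \<circ> fst) h \<noteq> 0"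
      using u(1) by auto
  qed
qed

lemma dependent_constraints_signed_relation:
  assumes "finite G" "\<not> independent_constraints G"
  obtains \<mu> where "(\<Sum>h\<in>G. \<mu> h *\<^sub>R fst h) = 0" "(\<Sum>h\<in>G. \<mu> h * snd h) \<le> 0"
    "(\<Sum>h\<in>G. \<mu> h * snd h) < 0 \<or> (\<exists>h\<in>G. 0 < \<mu> h)"
proof -
  obtain \<mu> where \<mu>: "(\<Sum>h\<in>G. \<mu> h *\<^sub>R fst h) = 0" "\<exists>h\<in>G. \<mu> h \<noteq> 0"
    by (rule dependent_constraints_relation[OF assms])
  show thesis
  proof (cases "(\<Sum>h\<in>G. \<mu> h * snd h) < 0 \<or> ((\<Sum>h\<in>G. \<mu> h * snd h) = 0 \<and> (\<exists>h\<in>G. 0 < \<mu> h))")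
    case True
    then show thesis
      using \<mu>(1) by (intro that[of \<mu>]) auto
  next
    case False
    have "(\<Sum>h\<in>G. (- \<mu> h) *\<^sub>R fst h) = 0"
      using \<mu>(1) by (simp add: sum_negf)
    moreover have "(\<Sum>h\<in>G. - \<mu> h * snd h) = - (\<Sum>h\<in>G. \<mu> h * snd h)"
      by (simp add: sum_negf)
    moreover have "(\<Sum>h\<in>G. - \<mu> h * snd h) < 0 \<or> (\<exists>h\<in>G. 0 < - \<mu> h)"
    proof (cases "(\<Sum>h\<in>G. \<mu> h * snd h) = 0")
      case True
      then obtain h where "h \<in> G" "\<mu> h < 0"
        using False \<mu>(2) by (meson linorder_neqE_linordered_idom)
      then show ?thesis
        by auto
    next
      case False
      then show ?thesis
        using \<open>\<not> (_ \<or> _)\<close> by (simp add: sum_negf)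
    qed
    ultimately show thesis
      using False by (intro that[of "\<lambda>h. - \<mu> h"]) auto
  qed
qed

lemma weighted_sum_nonneg_witness:
  fixes \<mu> \<psi> :: "'a \<Rightarrow> real"
  assumes "finite G" "0 \<le> (\<Sum>h\<in>G. \<mu> h * \<psi> h)" "0 < (\<Sum>h\<in>G. \<mu> h * \<psi> h) \<or> (\<exists>h\<in>G. 0 < \<mu> h)"
    and "\<forall>h\<in>G. \<mu> h \<le> 0 \<longrightarrow> 0 \<le> \<psi> h"
  shows "\<exists>h\<in>G. 0 < \<mu> h \<and> 0 \<le> \<psi> h"
proof (rule ccontr)
  assume contra: "\<not> ?thesis"
  have le: "\<mu> h * \<psi> h \<le> 0" if "h \<in> G" for h
  proof (cases "0 < \<mu> h")
    case True
    then have "\<psi> h < 0"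
      using contra that by force
    with True show ?thesis
      by (simp add: mult_pos_neg less_imp_le)
  next
    case False
    then have "0 \<le> \<psi> h"
      using assms(4) that by simp
    with False show ?thesis
      by (simp add: mult_nonpos_nonneg)
  qed
  then have "(\<Sum>h\<in>G. \<mu> h * \<psi> h) \<le> 0"
    by (rule sum_nonpos)
  then obtain h where h: "h \<in> G" "0 < \<mu> h"
    using assms(2,3) by auto
  then have "\<mu> h * \<psi> h < 0"
    using contra by (auto simp: mult_pos_neg)
  then have "(\<Sum>h\<in>G. \<mu> h * \<psi> h) < 0"
    using sum_strict_mono_ex1[OF assms(1), of "\<lambda>h. \<mu> h * \<psi> h" "\<lambda>_. 0"] le h(1) by auto
  with assms(2) show False
    by linarith
qed

(* A relation \<Sum>h. \<mu> h *\<^sub>R a\<^sub>h = 0 makes \<Sum>h. \<mu> h * (a\<^sub>h \<bullet> v - c\<^sub>h) independent of v. *)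
lemma dependent_constraints_cover:
  assumes "finite G" "\<not> independent_constraints G"
  obtains F where "F \<subseteq> G"
    "\<forall>v. (\<forall>h\<in>G - F. snd h \<le> fst h \<bullet> v) \<longrightarrow> (\<exists>h\<in>F. snd h \<le> fst h \<bullet> v)"
proof -
  obtain \<mu> where \<mu>: "(\<Sum>h\<in>G. \<mu> h *\<^sub>R fst h) = 0" "(\<Sum>h\<in>G. \<mu> h * snd h) \<le> 0"
    "(\<Sum>h\<in>G. \<mu> h * snd h) < 0 \<or> (\<exists>h\<in>G. 0 < \<mu> h)"
    by (rule dependent_constraints_signed_relation[OF assms])
  define F where "F = {h\<in>G. 0 < \<mu> h}"
  have "\<exists>h\<in>F. snd h \<le> fst h \<bullet> v" if v: "\<forall>h\<in>G - F. snd h \<le> fst h \<bullet> v" for v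
  proof -
    have "(\<Sum>h\<in>G. \<mu> h * (fst h \<bullet> v)) = (\<Sum>h\<in>G. \<mu> h *\<^sub>R fst h) \<bullet> v"
      by (simp add: inner_sum_left)
    then have "(\<Sum>h\<in>G. \<mu> h * (fst h \<bullet> v - snd h)) = - (\<Sum>h\<in>G. \<mu> h * snd h)"
      using \<mu>(1) by (simp add: right_diff_distrib sum_subtractf)
    moreover have "\<forall>h\<in>G. \<mu> h \<le> 0 \<longrightarrow> 0 \<le> fst h \<bullet> v - snd h"
      using v by (auto simp: F_def)
    ultimately have "\<exists>h\<in>G. 0 < \<mu> h \<and> 0 \<le> fst h \<bullet> v - snd h"
      using \<mu>(2,3) by (intro weighted_sum_nonneg_witness[OF assms(1)]) auto
    then obtain h where "h \<in> G" "0 < \<mu> h" "0 \<le> fst h \<bullet> v - snd h"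
      by blast
    then show ?thesis
      unfolding F_def by (intro bexI[of _ h]) auto
  qed
  then show thesis
    by (intro that[of F]) (auto simp: F_def)
qed

lemma int_combination_feasible_set:
  assumes "\<forall>h\<in>A. opposite h \<in> A" "generic_for A g" "finite A"
  shows "G \<subseteq> A \<Longrightarrow> int_combination (good_cells A g) (\<lambda>v. of_bool (v \<in> feasible_set G))"
proof (induction "card G" arbitrary: G rule: less_induct)
  case less
  have finG: "finite G"
    using less.prems assms(3) finite_subset by blast
  show ?case
  proof (cases "independent_constraints G")
    case True
    then show ?thesis
      unfolding feasible_set_eq_simplicial_cone
      using int_combination_simplicial_cone[OF assms(1,2) less.prems] by blast
  next
    case False
    obtain F where F: "F \<subseteq> G"
      "\<forall>v. (\<forall>h\<in>G - F. snd h \<le> fst h \<bullet> v) \<longrightarrow> (\<exists>h\<in>F. snd h \<le> fst h \<bullet> v)"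
      by (rule dependent_constraints_cover[OF finG False])
    have "(of_bool (v \<in> feasible_set G) :: int) =
        (\<Sum>T\<in>Pow F - {{}}. (-1) ^ (card T + 1) * of_bool (v \<in> feasible_set (G - T)))" for v
      unfolding feasible_set_def mem_Collect_eq
      using F(2) by (intro indicator_inclusion_exclusion[OF finG F(1), where p = "\<lambda>h. snd h \<le> fst h \<bullet> v"]) blast
    moreover have "int_combination (good_cells A g) (\<lambda>v. of_bool (v \<in> feasible_set (G - T)))"
      if "T \<in> Pow F - {{}}" for T
    proof (rule less.hyps)
      show "card (G - T) < card G"
        using that F(1) finG by (intro psubset_card_mono) auto
      show "G - T \<subseteq> A"
        using less.prems by blast
    qed
    then have "int_combination (good_cells A g)
        (\<lambda>v. \<Sum>T\<in>Pow F - {{}}. (-1) ^ (card T + 1) * of_bool (v \<in> feasible_set (G - T)))"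
      using finG F(1) by (intro int_combination_sum) (auto intro: finite_subset)
    ultimately show ?thesis
      by simp
  qed
qed

section \<open>Good cells are polarized rational polyhedral cones\<close>

lemma mem_translation: "x \<in> (\<lambda>v. w + v) ` K \<longleftrightarrow> x - w \<in> (K :: 'a::ab_group_add set)"
proof
  assume "x - w \<in> K"
  then show "x \<in> (\<lambda>v. w + v) ` K"
    by (rule rev_image_eqI) simp
qed auto

lemma mem_uminus_image: "x \<in> uminus ` K \<longleftrightarrow> - x \<in> (K :: 'a::group_add set)"
proof
  assume "- x \<in> K"
  then show "x \<in> uminus ` K"
    by (rule rev_image_eqI) simp
qed auto

lemma translated_cone_lineality_subset:
  assumes eq: "(\<lambda>v. w + v) ` K = (\<lambda>v. w' + v) ` K'"
    and K: "convex_cone K" and K': "convex_cone K'"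
  shows "(\<lambda>v. w + v) ` (K \<inter> uminus ` K) \<subseteq> (\<lambda>v. w' + v) ` (K' \<inter> uminus ` K')"
proof
  define d where "d = w - w'"
  have K'_eq: "k' \<in> K' \<longleftrightarrow> k' - d \<in> K" for k'
  proof -
    have "k' \<in> K' \<longleftrightarrow> w' + k' \<in> (\<lambda>v. w' + v) ` K'"
      by (simp add: mem_translation)
    also have "\<dots> \<longleftrightarrow> w' + k' \<in> (\<lambda>v. w + v) ` K"
      by (simp only: eq)
    also have "\<dots> \<longleftrightarrow> k' - d \<in> K"
      by (simp only: mem_translation) (simp add: d_def algebra_simps)
    finally show ?thesis .
  qed
  have "- d \<in> K" "d \<in> K'"
    using K'_eq[of 0] K'_eq[of d] convex_cone_contains_0[OF K] convex_cone_contains_0[OF K']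
    by auto
  then have "d \<in> K"
    using K'_eq[of "2 *\<^sub>R d"] convex_cone_scaleR[OF K', of 2] by (simp add: scaleR_2)
  fix x
  assume "x \<in> (\<lambda>v. w + v) ` (K \<inter> uminus ` K)"
  then obtain k where k: "k \<in> K" "- k \<in> K" "x = w + k"
    by (auto simp: image_iff)
  have "d + k \<in> K'"
    using K'_eq k(1) by simp
  moreover have "d + k \<in> uminus ` K'"
  proof -
    have "- d + (- d + - k) \<in> K"
      using convex_cone_add[OF K] \<open>- d \<in> K\<close> k(2) by blast
    then have "- (d + k) \<in> K'"
      using K'_eq by (simp add: algebra_simps)
    then show ?thesis
      by (rule rev_image_eqI) simp
  qed
  moreover have "x = w' + (d + k)"
    using k(3) by (simp add: d_def)
  ultimately show "x \<in> (\<lambda>v. w' + v) ` (K' \<inter> uminus ` K')"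
    by blast
qed

(* apex_set is defined by choice, so it has to be shown independent of the representation w + K. *)
lemma apex_set_translated_cone:
  assumes "P = (\<lambda>v. w + v) ` K" "convex_cone K" "closed K" "polyhedron K"
  shows "apex_set P = (\<lambda>v. w + v) ` (K \<inter> uminus ` K)"
proof -
  define \<Phi> where "\<Phi> L \<longleftrightarrow> (\<exists>w K. P = (\<lambda>v. w + v) ` K \<and> convex_cone K \<and> closed K \<and>
    polyhedron K \<and> L = (\<lambda>v. w + v) ` (K \<inter> uminus ` K))" for L
  have "\<Phi> (SOME L. \<Phi> L)"
    by (rule someI[of \<Phi> "(\<lambda>v. w + v) ` (K \<inter> uminus ` K)"]) (use assms in \<open>auto simp: \<Phi>_def\<close>)
  then obtain w' K' where K': "P = (\<lambda>v. w' + v) ` K'" "convex_cone K'"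
    and apex: "apex_set P = (\<lambda>v. w' + v) ` (K' \<inter> uminus ` K')"
    unfolding \<Phi>_def apex_set_def by blast
  show ?thesis
    unfolding apex
    using translated_cone_lineality_subset[OF _ assms(2) K'(2)]
      translated_cone_lineality_subset[OF _ K'(2) assms(2)] assms(1) K'(1)
    by (metis subset_antisym)
qed

lemma translated_subspace_eq:
  assumes eq: "(\<lambda>v. p + v) ` W = (\<lambda>v. p' + v) ` W'" and "subspace W" "subspace W'"
  shows "W' = W" "p' - p \<in> W"
proof -
  have "W' = (\<lambda>v. (p - p') + v) ` W"
    using eq translation_galois[of "(\<lambda>v. p + v) ` W" p' W'] translation_assoc[of "- p'" p W]
    by (simp add: algebra_simps)
  then have "affine_parallel W W'"
    unfolding affine_parallel_def by blast
  then show "W' = W"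
    using parallel_subspace assms(2,3) by metis
  have "p' + 0 \<in> (\<lambda>v. p + v) ` W"
    unfolding eq using \<open>subspace W'\<close> by (simp add: subspace_0)
  then show "p' - p \<in> W"
    by (simp add: mem_translation)
qed

definition lineality :: "('v::real_inner \<times> real) set \<Rightarrow> 'v set" where
  "lineality B = {k. \<forall>h\<in>B. fst h \<bullet> k = 0}"

definition recession_cone :: "('v::real_inner \<times> real) set \<Rightarrow> ('v \<times> real) set \<Rightarrow> 'v set" where
  "recession_cone B S = {k. (\<forall>h\<in>B. 0 \<le> fst h \<bullet> k) \<and> (\<forall>h\<in>B - S. fst h \<bullet> k \<le> 0)}"

definition apex_point :: "('v::euclidean_space \<times> real) set \<Rightarrow> 'v" where
  "apex_point B = (\<Sum>h\<in>B. snd h *\<^sub>R dual_vector B h)"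

lemma subspace_lineality: "subspace (lineality B)"
  by (auto simp: subspace_def lineality_def inner_add_right)

lemma lineality_subset_recession_cone: "lineality B \<subseteq> recession_cone B S"
  by (auto simp: lineality_def recession_cone_def)

lemma inner_apex_point:
  assumes "independent_constraints B" "h \<in> B"
  shows "fst h \<bullet> apex_point B = snd h"
proof -
  have "fst h \<bullet> apex_point B = (\<Sum>h'\<in>B. snd h' * (fst h \<bullet> dual_vector B h'))"
    by (simp add: apex_point_def inner_sum_right)
  also have "\<dots> = (\<Sum>h'\<in>B. if h' = h then snd h' else 0)"
    using assms by (intro sum.cong) (auto simp: inner_dual_vector)
  also have "\<dots> = snd h"
    using independent_constraints_finite[OF assms(1)] assms(2) by simp
  finally show ?thesis .
qed

lemma simplicial_cone_eq_translation:
  assumes "independent_constraints B"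
  shows "simplicial_cone B S = (\<lambda>v. apex_point B + v) ` recession_cone B S"
proof (rule set_eqI)
  fix v
  have "fst h \<bullet> (v - apex_point B) = fst h \<bullet> v - snd h" if "h \<in> B" for h
    using inner_apex_point[OF assms that] by (simp add: inner_diff_right)
  then show "v \<in> simplicial_cone B S \<longleftrightarrow> v \<in> (\<lambda>v. apex_point B + v) ` recession_cone B S"
    unfolding mem_translation mem_simplicial_cone recession_cone_def by auto
qed

lemma recession_cone_polyhedral:
  fixes B :: "('v::euclidean_space \<times> real) set"
  assumes "finite B"
  shows "convex_cone (recession_cone B S)" "polyhedron (recession_cone B S)"
proof -
  let ?H = "(\<lambda>h. {k. 0 \<le> fst h \<bullet> k}) ` B \<union> (\<lambda>h. {k. fst h \<bullet> k \<le> 0}) ` (B - S)"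
  have eq: "recession_cone B S = \<Inter> ?H"
    by (rule set_eqI) (simp add: recession_cone_def ball_Un Ball_image_comp comp_def)
  show "convex_cone (recession_cone B S)"
    unfolding eq by (rule convex_cone_Inter) (auto simp: convex_cone_halfspace_ge convex_cone_halfspace_le)
  show "polyhedron (recession_cone B S)"
    unfolding eq using assms
    by (intro polyhedron_Inter) (auto intro: polyhedron_halfspace_ge polyhedron_halfspace_le)
qed

lemma recession_cone_lineality: "recession_cone B S \<inter> uminus ` recession_cone B S = lineality B"
proof -
  have "k \<in> recession_cone B S \<and> - k \<in> recession_cone B S \<longleftrightarrow> k \<in> lineality B" for k
    unfolding recession_cone_def lineality_def by (auto simp: order.eq_iff)
  then show ?thesis
    by (simp only: set_eq_iff Int_iff mem_uminus_image) blast
qed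

lemma apex_set_simplicial_cone:
  assumes "independent_constraints B"
  shows "apex_set (simplicial_cone B S) = (\<lambda>v. apex_point B + v) ` lineality B"
proof -
  have "finite B"
    using assms by (rule independent_constraints_finite)
  then have "apex_set (simplicial_cone B S) =
      (\<lambda>v. apex_point B + v) ` (recession_cone B S \<inter> uminus ` recession_cone B S)"
    using recession_cone_polyhedral polyhedron_imp_closed[OF recession_cone_polyhedral(2)]
    by (intro apex_set_translated_cone[OF simplicial_cone_eq_translation[OF assms]])
  then show ?thesis
    by (simp only: recession_cone_lineality)
qed

lemma inner_span_lineality:
  assumes "y \<in> span (fst ` B)" "x \<in> lineality B"
  shows "y \<bullet> x = 0"
proof (rule span_inner_eq_0[OF assms(1)])
  fix t
  assume "t \<in> fst ` B"
  then obtain h where "h \<in> B" "t = fst h"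
    by blast
  then show "t \<bullet> x = 0"
    using assms(2) by (simp add: lineality_def)
qed

lemma lineality_projection_exists:
  fixes B :: "('v::euclidean_space \<times> real) set"
  shows "\<exists>a. (\<forall>x\<in>lineality B. a \<bullet> x = 0) \<and> g - a \<in> lineality B"
proof -
  obtain a z where a: "a \<in> span (fst ` B)" and z: "\<And>w. w \<in> span (fst ` B) \<Longrightarrow> orthogonal z w"
    and g: "g = a + z"
    using orthogonal_subspace_decomp_exists[of "fst ` B" g] by blast
  have "fst h \<bullet> z = 0" if "h \<in> B" for h
    using z[of "fst h"] that by (simp add: span_base orthogonal_def inner_commute[of z])
  then have "g - a \<in> lineality B"
    using g by (simp add: lineality_def)
  then show ?thesis
    using inner_span_lineality[OF a] by blast
qed

lemma inner_dual_vector_projection: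
  assumes "independent_constraints B" "h \<in> B" "g - a \<in> lineality B"
  shows "a \<bullet> dual_vector B h = g \<bullet> dual_vector B h"
proof -
  have "dual_vector B h \<bullet> (g - a) = 0"
    using inner_span_lineality[OF dual_vector_in_span[OF assms(1,2)] assms(3)] .
  then show ?thesis
    by (simp add: inner_diff_right inner_commute[of "dual_vector B h"])
qed

lemma dual_vector_expansion:
  assumes "independent_constraints B"
  shows "k - (\<Sum>s\<in>B. (fst s \<bullet> k) *\<^sub>R dual_vector B s) \<in> lineality B"
proof -
  have "fst h \<bullet> (\<Sum>s\<in>B. (fst s \<bullet> k) *\<^sub>R dual_vector B s) = fst h \<bullet> k" if "h \<in> B" for h
  proof -
    have "fst h \<bullet> (\<Sum>s\<in>B. (fst s \<bullet> k) *\<^sub>R dual_vector B s) = (\<Sum>s\<in>B. if s = h then fst s \<bullet> k else 0)"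
      unfolding inner_sum_right using assms that by (intro sum.cong) (auto simp: inner_dual_vector)
    then show ?thesis
      using that independent_constraints_finite[OF assms] by simp
  qed
  then show ?thesis
    by (simp add: lineality_def inner_diff_right)
qed

lemma inner_recession_cone:
  assumes "independent_constraints B" "S \<subseteq> B" "k \<in> recession_cone B S"
    and "\<forall>x\<in>lineality B. a \<bullet> x = 0" "g - a \<in> lineality B"
  shows "a \<bullet> k = (\<Sum>s\<in>S. (fst s \<bullet> k) * (g \<bullet> dual_vector B s))"
proof -
  have "a \<bullet> (k - (\<Sum>s\<in>B. (fst s \<bullet> k) *\<^sub>R dual_vector B s)) = 0"
    using dual_vector_expansion[OF assms(1)] assms(4) by blast
  then have "a \<bullet> k = (\<Sum>s\<in>B. (fst s \<bullet> k) * (a \<bullet> dual_vector B s))"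
    by (simp add: inner_diff_right inner_sum_right)
  also have "\<dots> = (\<Sum>s\<in>B. (fst s \<bullet> k) * (g \<bullet> dual_vector B s))"
    using inner_dual_vector_projection[OF assms(1) _ assms(5)] by simp
  also have "\<dots> = (\<Sum>s\<in>S. (fst s \<bullet> k) * (g \<bullet> dual_vector B s))"
    using assms(2,3) independent_constraints_finite[OF assms(1)]
    by (intro sum.mono_neutral_right) (auto simp: recession_cone_def intro: order_antisym)
  finally show ?thesis .
qed

lemma recession_cone_inner_projection:
  assumes B: "independent_constraints B" "S \<subseteq> B" and pos: "\<forall>s\<in>S. 0 < g \<bullet> dual_vector B s"
    and a: "\<forall>x\<in>lineality B. a \<bullet> x = 0" "g - a \<in> lineality B"
    and k: "k \<in> recession_cone B S"
  shows "0 \<le> a \<bullet> k" "a \<bullet> k = 0 \<longleftrightarrow> k \<in> lineality B"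
proof -
  have S: "finite S"
    using B independent_constraints_finite finite_subset by blast
  have nonneg: "\<forall>s\<in>S. 0 \<le> (fst s \<bullet> k) * (g \<bullet> dual_vector B s)"
  proof
    fix s
    assume "s \<in> S"
    then have "0 \<le> fst s \<bullet> k" "0 < g \<bullet> dual_vector B s"
      using k B(2) pos unfolding recession_cone_def by blast+
    then show "0 \<le> (fst s \<bullet> k) * (g \<bullet> dual_vector B s)"
      by simp
  qed
  then show "0 \<le> a \<bullet> k"
    unfolding inner_recession_cone[OF B k a] by (simp add: sum_nonneg)
  show "a \<bullet> k = 0 \<longleftrightarrow> k \<in> lineality B"
  proof
    assume "a \<bullet> k = 0"
    then have "\<forall>s\<in>S. (fst s \<bullet> k) * (g \<bullet> dual_vector B s) = 0"
      unfolding inner_recession_cone[OF B k a]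
      using sum_nonneg_eq_0_iff[OF S, of "\<lambda>s. (fst s \<bullet> k) * (g \<bullet> dual_vector B s)"] nonneg by blast
    then have "fst s \<bullet> k = 0" if "s \<in> S" for s
      using pos that by fastforce
    then show "k \<in> lineality B"
      using k unfolding recession_cone_def lineality_def by (auto simp: order.eq_iff)
  qed (use a(1) in blast)
qed

lemma simplicial_cone_polarized:
  assumes B: "independent_constraints B" "S \<subseteq> B" and pos: "\<forall>s\<in>S. 0 < g \<bullet> dual_vector B s"
    and a: "\<forall>x\<in>lineality B. a \<bullet> x = 0" "g - a \<in> lineality B"
  shows "polarized a (a \<bullet> apex_point B) (simplicial_cone B S)"
proof -
  let ?p = "apex_point B"
  note k = recession_cone_inner_projection[OF B pos a]
  have cone: "v \<in> simplicial_cone B S \<longleftrightarrow> v - ?p \<in> recession_cone B S" for v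
    by (simp add: simplicial_cone_eq_translation[OF B(1)] mem_translation)
  have "a \<bullet> ?p \<le> a \<bullet> v" if "v \<in> simplicial_cone B S" for v
    using k(1)[of "v - ?p"] that cone by (simp add: inner_diff_right)
  moreover have "v \<in> simplicial_cone B S \<and> a \<bullet> v = a \<bullet> ?p \<longleftrightarrow> v - ?p \<in> lineality B" for v
    using cone[of v] k(2)[of "v - ?p"] lineality_subset_recession_cone[of B S]
    by (auto simp: inner_diff_right)
  ultimately show ?thesis
    unfolding polarized_def apex_set_simplicial_cone[OF B(1)] mem_translation[symmetric]
    by blast
qed

(* The vector a is the orthogonal projection of g onto the span of the normals of Q; it depends
   only on lineality B, which is determined by the apex set. *)
lemma good_cells_polarized:
  assumes g: "generic_for A g" and \<Q>: "\<Q> \<subseteq> good_cells A g"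
    and Q: "Q \<in> \<Q>" and apex: "apex_set Q \<noteq> UNIV"
  shows "\<exists>a c. a \<noteq> 0 \<and> (\<forall>Q'\<in>\<Q>. apex_set Q' = apex_set Q \<longrightarrow> polarized a c Q')"
proof -
  obtain B S where B: "B \<subseteq> A" "independent_constraints B" "S \<subseteq> B"
    and Q_eq: "Q = simplicial_cone B S"
    using Q \<Q> unfolding good_cells_def by blast
  obtain a where a: "\<forall>x\<in>lineality B. a \<bullet> x = 0" "g - a \<in> lineality B"
    using lineality_projection_exists by blast
  have apex_Q: "apex_set Q = (\<lambda>v. apex_point B + v) ` lineality B"
    unfolding Q_eq by (rule apex_set_simplicial_cone[OF B(2)])
  have "lineality B \<noteq> UNIV"
  proof
    assume "lineality B = UNIV"
    then have "apex_set Q = UNIV"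
      unfolding apex_Q by (simp add: set_eq_iff mem_translation)
    with apex show False ..
  qed
  then have "B \<noteq> {}"
    by (auto simp: lineality_def)
  then obtain h where h: "h \<in> B"
    by blast
  have "g \<bullet> dual_vector B h \<noteq> 0"
    using g B(1,2) h unfolding generic_for_def by blast
  then have "a \<noteq> 0"
    using inner_dual_vector_projection[OF B(2) h a(2)] by auto
  moreover have "polarized a (a \<bullet> apex_point B) Q'"
    if Q': "Q' \<in> \<Q>" "apex_set Q' = apex_set Q" for Q'
  proof -
    obtain B' S' where B': "B' \<subseteq> A" "independent_constraints B'" "S' \<subseteq> B'"
      "\<forall>s\<in>S'. 0 < g \<bullet> dual_vector B' s" and Q'_eq: "Q' = simplicial_cone B' S'"
      using Q'(1) \<Q> unfolding good_cells_def by blast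
    have eq: "(\<lambda>v. apex_point B' + v) ` lineality B' = (\<lambda>v. apex_point B + v) ` lineality B"
      using Q'(2) unfolding apex_Q Q'_eq apex_set_simplicial_cone[OF B'(2)] .
    have W: "lineality B = lineality B'"
      by (rule translated_subspace_eq(1)[OF eq subspace_lineality subspace_lineality])
    have "apex_point B - apex_point B' \<in> lineality B'"
      by (rule translated_subspace_eq(2)[OF eq subspace_lineality subspace_lineality])
    then have "a \<bullet> (apex_point B - apex_point B') = 0"
      using a(1) W by simp
    then have "a \<bullet> apex_point B' = a \<bullet> apex_point B"
      by (simp add: inner_diff_right)
    moreover have "polarized a (a \<bullet> apex_point B') Q'"
      unfolding Q'_eq by (rule simplicial_cone_polarized[OF B'(2-4)]) (use a W in auto)
    ultimately show ?thesis
      by simp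
  qed
  ultimately show ?thesis
    by blast
qed

definition rational_constraint :: "'v::euclidean_space set \<Rightarrow> 'v \<times> real \<Rightarrow> bool" where
  "rational_constraint \<Lambda> h \<longleftrightarrow> rat_functional \<Lambda> (fst h) \<and> snd h \<in> \<rat>"

lemma rational_constraint_opposite:
  "rational_constraint \<Lambda> h \<Longrightarrow> rational_constraint \<Lambda> (opposite h)"
  by (simp add: rational_constraint_def rat_functional_def opposite_def)

lemma rat_polyhedron_iff_feasible_set:
  "rat_polyhedron \<Lambda> P \<longleftrightarrow>
     (\<exists>G. finite G \<and> (\<forall>h\<in>G. rational_constraint \<Lambda> h) \<and> P = feasible_set G)"
proof -
  have "(\<Inter>(a, c)\<in>G. {v. c \<le> a \<bullet> v}) = feasible_set G" for G :: "('a \<times> real) set"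
    by (rule set_eqI) (simp add: feasible_set_def case_prod_beta)
  moreover have "(\<forall>(a, c)\<in>G. rat_functional \<Lambda> a \<and> c \<in> \<rat>) \<longleftrightarrow> (\<forall>h\<in>G. rational_constraint \<Lambda> h)"
    for G :: "('a \<times> real) set"
    by (simp add: rational_constraint_def case_prod_beta)
  ultimately show ?thesis
    unfolding rat_polyhedron_def by simp
qed

lemma rat_poly_cone_simplicial_cone:
  assumes "independent_constraints B" "\<forall>h\<in>B. rational_constraint \<Lambda> h"
  shows "rat_poly_cone \<Lambda> (simplicial_cone B S)"
proof -
  have fin: "finite B"
    using assms(1) by (rule independent_constraints_finite)
  have "\<forall>h\<in>B \<union> opposite ` (B - S). rational_constraint \<Lambda> h"
    using assms(2) rational_constraint_opposite by blast
  then have "rat_polyhedron \<Lambda> (simplicial_cone B S)"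
    unfolding rat_polyhedron_iff_feasible_set simplicial_cone_def
    using fin by (intro exI[of _ "B \<union> opposite ` (B - S)"]) simp
  moreover have "closed (recession_cone B S)"
    using polyhedron_imp_closed recession_cone_polyhedral(2)[OF fin] .
  ultimately show ?thesis
    unfolding rat_poly_cone_def
    using simplicial_cone_eq_translation[OF assms(1)] recession_cone_polyhedral[OF fin]
    by (intro conjI exI[of _ "apex_point B"] exI[of _ "recession_cone B S"])
qed

lemma good_cells_rat_poly_cone:
  assumes "\<forall>h\<in>A. rational_constraint \<Lambda> h" "Q \<in> good_cells A g"
  shows "rat_poly_cone \<Lambda> Q"
  using assms rat_poly_cone_simplicial_cone unfolding good_cells_def by blast

lemma rat_polyhedra_good_cell_combination:
  fixes \<Lambda> :: "'v::euclidean_space set"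
  assumes "finite J" "\<forall>j\<in>J. rat_polyhedron \<Lambda> (P j)"
  obtains A g R \<kappa> where "generic_for A g" "\<forall>h\<in>A. rational_constraint \<Lambda> h"
    "finite R" "R \<subseteq> good_cells A g"
    "\<forall>j\<in>J. \<forall>v. (of_bool (v \<in> P j) :: int) = (\<Sum>Q\<in>R. \<kappa> j Q * of_bool (v \<in> Q))"
proof -
  have "\<exists>G. \<forall>j\<in>J. finite (G j) \<and> (\<forall>h\<in>G j. rational_constraint \<Lambda> h) \<and> P j = feasible_set (G j)"
    using assms(2) unfolding rat_polyhedron_iff_feasible_set by (rule bchoice)
  then obtain G where G: "\<forall>j\<in>J. finite (G j) \<and> (\<forall>h\<in>G j. rational_constraint \<Lambda> h) \<and>
      P j = feasible_set (G j)" ..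
  define A where "A = (\<Union>j\<in>J. G j) \<union> opposite ` (\<Union>j\<in>J. G j)"
  have A: "finite A" "\<forall>h\<in>A. opposite h \<in> A"
    using assms(1) G unfolding A_def by auto
  have "\<forall>h\<in>A. rational_constraint \<Lambda> h"
    using G rational_constraint_opposite unfolding A_def by blast
  obtain g where g: "generic_for A g"
    using generic_for_exists[OF A(1)] ..
  have "G j \<subseteq> A" if "j \<in> J" for j
    using that unfolding A_def by blast
  then have "\<forall>j\<in>J. int_combination (good_cells A g) (\<lambda>v. of_bool (v \<in> P j))"
    using int_combination_feasible_set[OF A(2) g A(1)] G by simp
  then obtain R \<kappa> where R: "finite R" "R \<subseteq> good_cells A g"
    and "\<forall>j\<in>J. (\<lambda>v. of_bool (v \<in> P j) :: int) = (\<lambda>v. \<Sum>Q\<in>R. \<kappa> j Q * of_bool (v \<in> Q))"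
    by (rule int_combination_common_support[OF assms(1)])
  then have "\<forall>j\<in>J. \<forall>v. (of_bool (v \<in> P j) :: int) = (\<Sum>Q\<in>R. \<kappa> j Q * of_bool (v \<in> Q))"
    by (simp add: fun_eq_iff)
  with R show thesis
    using that[OF g \<open>\<forall>h\<in>A. rational_constraint \<Lambda> h\<close>] by blast
qed

section \<open>Regrouping the cones over the cells\<close>

lemma in_cone_iff: "in_cone Q s (t, x) \<longleftrightarrow> 0 < t \<and> inverse (of_int t) *\<^sub>R (x - s) \<in> Q"
proof
  assume "in_cone Q s (t, x)"
  then obtain v where "0 < t" "v \<in> Q" "x = of_int t *\<^sub>R v + s"
    unfolding in_cone_def by auto
  then show "0 < t \<and> inverse (of_int t) *\<^sub>R (x - s) \<in> Q"
    by simp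
next
  assume t: "0 < t \<and> inverse (of_int t) *\<^sub>R (x - s) \<in> Q"
  then have "x = of_int t *\<^sub>R (inverse (of_int t) *\<^sub>R (x - s)) + s"
    by simp
  with t show "in_cone Q s (t, x)"
    unfolding in_cone_def fst_conv snd_conv by blast
qed

lemma in_cone_indicator_combination:
  assumes "\<forall>v. (of_bool (v \<in> P) :: int) = (\<Sum>Q\<in>R. \<kappa> Q * of_bool (v \<in> Q))"
  shows "(of_bool (in_cone P s z) :: int) = (\<Sum>Q\<in>R. \<kappa> Q * of_bool (in_cone Q s z))"
proof (cases z)
  case (Pair t x)
  then show ?thesis
    using assms by (cases "0 < t") (simp_all add: in_cone_iff del: sum_mult_of_bool_eq)
qed

lemma quasi_poly_const: "quasi_poly \<Lambda> (\<lambda>z. c)"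
  by (rule qp_periodic) (auto simp: periodic_fun_def intro: exI[of _ 1])

lemma quasi_poly_sum:
  assumes "finite X" "\<forall>x\<in>X. quasi_poly \<Lambda> (f x)"
  shows "quasi_poly \<Lambda> (\<lambda>z. \<Sum>x\<in>X. c x * f x z)"
  using assms
proof (induction X rule: finite_induct)
  case empty
  show ?case
    using quasi_poly_const[of \<Lambda> 0] by simp
next
  case (insert x X)
  then have "quasi_poly \<Lambda> (\<lambda>z. c x * f x z + (\<Sum>x\<in>X. c x * f x z))"
    by (intro qp_add qp_mult quasi_poly_const) auto
  then show ?case
    using insert.hyps by simp
qed

lemma is_decomposition_regroup:
  fixes q :: "'j \<Rightarrow> int \<times> 'v::euclidean_space \<Rightarrow> complex"
  assumes J: "finite J" and R: "finite R" "\<forall>Q\<in>R. rat_polyhedron \<Lambda> Q"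
    and \<sigma>: "\<forall>j\<in>J. \<sigma> j \<in> lattice_Q \<Lambda>" and q: "\<forall>j\<in>J. quasi_poly \<Lambda> (q j)"
    and ind: "\<forall>j\<in>J. \<forall>v. (of_bool (v \<in> P j) :: int) = (\<Sum>Q\<in>R. \<kappa> j Q * of_bool (v \<in> Q))"
    and m: "\<forall>t x. x \<in> \<Lambda> \<longrightarrow>
      m (t, x) = (\<Sum>j\<in>J. q j (t, x) * of_bool (in_cone (P j) (\<sigma> j) (t, x)))"
  shows "is_decomposition \<Lambda> m (R \<times> \<sigma> ` J)
    (\<lambda>Q s z. \<Sum>j\<in>{j\<in>J. \<sigma> j = s}. of_int (\<kappa> j Q) * q j z)"
proof -
  define qI where "qI Q s z = (\<Sum>j\<in>{j\<in>J. \<sigma> j = s}. of_int (\<kappa> j Q) * q j z)" for Q s z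
  let ?I = "R \<times> \<sigma> ` J"
  have fin: "finite ?I"
    using J R(1) by simp
  have "\<forall>(Q, s)\<in>?I. rat_polyhedron \<Lambda> Q \<and> s \<in> lattice_Q \<Lambda> \<and> quasi_poly \<Lambda> (qI Q s)"
    using R(2) \<sigma> q J unfolding qI_def by (auto intro!: quasi_poly_sum)
  moreover have "locally_finite_fam ?I"
    unfolding locally_finite_fam_def using fin by (auto intro: exI[of _ 1])
  moreover have "m (t, x) = (\<Sum>p\<in>{p\<in>?I. in_cone (fst p) (snd p) (t, x)}. qI (fst p) (snd p) (t, x))"
    if "x \<in> \<Lambda>" for t x
  proof -
    let ?z = "(t, x)"
    let ?c = "\<lambda>Q s. (of_bool (in_cone Q s ?z) :: complex)"
    have "m ?z = (\<Sum>j\<in>J. q j ?z * ?c (P j) (\<sigma> j))"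
      using m that by blast
    also have "\<dots> = (\<Sum>j\<in>J. \<Sum>Q\<in>R. of_int (\<kappa> j Q) * q j ?z * ?c Q (\<sigma> j))"
    proof (rule sum.cong[OF refl])
      fix j
      assume "j \<in> J"
      then have "(of_bool (in_cone (P j) (\<sigma> j) ?z) :: int) =
          (\<Sum>Q\<in>R. \<kappa> j Q * of_bool (in_cone Q (\<sigma> j) ?z))"
        using ind in_cone_indicator_combination by blast
      then have "?c (P j) (\<sigma> j) = (\<Sum>Q\<in>R. of_int (\<kappa> j Q) * ?c Q (\<sigma> j))"
        by (metis (no_types, lifting) of_int_of_bool of_int_sum of_int_mult sum.cong)
      then show "q j ?z * ?c (P j) (\<sigma> j) = (\<Sum>Q\<in>R. of_int (\<kappa> j Q) * q j ?z * ?c Q (\<sigma> j))"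
        by (simp add: sum_distrib_left mult_ac del: sum_mult_of_bool_eq)
    qed
    also have "\<dots> = (\<Sum>Q\<in>R. \<Sum>j\<in>J. of_int (\<kappa> j Q) * q j ?z * ?c Q (\<sigma> j))"
      by (rule sum.swap)
    also have "\<dots> = (\<Sum>Q\<in>R. \<Sum>s\<in>\<sigma> ` J. \<Sum>j\<in>{j\<in>J. \<sigma> j = s}. of_int (\<kappa> j Q) * q j ?z * ?c Q (\<sigma> j))"
      using J by (intro sum.cong refl sum.group[symmetric]) auto
    also have "\<dots> = (\<Sum>Q\<in>R. \<Sum>s\<in>\<sigma> ` J. qI Q s ?z * ?c Q s)"
      unfolding qI_def sum_distrib_right by (intro sum.cong refl) auto
    also have "\<dots> = (\<Sum>p\<in>?I. qI (fst p) (snd p) ?z * ?c (fst p) (snd p))"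
      by (simp add: sum.cartesian_product case_prod_beta del: sum_mult_of_bool_eq)
    also have "\<dots> = (\<Sum>p\<in>{p\<in>?I. in_cone (fst p) (snd p) ?z}. qI (fst p) (snd p) ?z)"
      using fin by (simp add: Int_def)
    finally show ?thesis .
  qed
  ultimately have "is_decomposition \<Lambda> m ?I qI"
    unfolding is_decomposition_def by blast
  then show ?thesis
    unfolding qI_def .
qed

theorem proposition4p9:
  fixes \<Lambda> :: "'v::euclidean_space set"
    and J :: "'j set"
    and P :: "'j \<Rightarrow> 'v set"
    and \<sigma> :: "'j \<Rightarrow> 'v"
    and q :: "'j \<Rightarrow> int \<times> 'v \<Rightarrow> complex"
    and m :: "int \<times> 'v \<Rightarrow> complex"
  assumes "full_rank_lattice \<Lambda>"
    and "finite J"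
    and "\<forall>j\<in>J. rat_polyhedron \<Lambda> (P j)"
    and "\<forall>j\<in>J. \<sigma> j \<in> lattice_Q \<Lambda>"
    and "\<forall>j\<in>J. quasi_poly \<Lambda> (q j)"
    and "\<forall>t x. x \<in> \<Lambda> \<longrightarrow>
           m (t, x) = (\<Sum>j\<in>J. q j (t, x) * of_bool (in_cone (P j) (\<sigma> j) (t, x)))"
  shows "in_S_pol \<Lambda> m"
proof -
  obtain A g R \<kappa> where g: "generic_for A g" and A: "\<forall>h\<in>A. rational_constraint \<Lambda> h"
    and R: "finite R" "R \<subseteq> good_cells A g"
    and ind: "\<forall>j\<in>J. \<forall>v. (of_bool (v \<in> P j) :: int) = (\<Sum>Q\<in>R. \<kappa> j Q * of_bool (v \<in> Q))"
    by (rule rat_polyhedra_good_cell_combination[OF assms(2,3)])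
  let ?I = "R \<times> \<sigma> ` J" and ?q = "\<lambda>Q s z. \<Sum>j\<in>{j\<in>J. \<sigma> j = s}. of_int (\<kappa> j Q) * q j z"
  have cones: "\<forall>Q\<in>R. rat_poly_cone \<Lambda> Q"
    using good_cells_rat_poly_cone[OF A] R(2) by blast
  then have "is_decomposition \<Lambda> m ?I ?q"
    using assms(2,4-6) R(1) ind unfolding rat_poly_cone_def by (intro is_decomposition_regroup) auto
  moreover have "\<forall>p\<in>?I. rat_poly_cone \<Lambda> (fst p)"
    using cones by auto
  moreover have "fst ` ?I \<subseteq> good_cells A g"
    using R(2) by auto
  ultimately show ?thesis
    unfolding in_S_pol_def using good_cells_polarized[OF g]
    by (intro exI[of _ ?I] exI[of _ ?q]) blast
qed

end
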